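(* Let $R>1$, $C\geq1$ and $\delta\in(0,1)$. Let $h:[-1,1]\setminus\{0\}\to\mathbb R$ satisfy $h(x)\ll e^{|x|^{-1+\delta}}$ for $x\neq0$, and assume $|h(x)|\to\infty$ as $x\to0^\pm$ for some choice of sign $\pm$. Let $\xi:(0,1]\to(0,1]$ satisfy $\lim_{x\to0^+}\xi(x)=0$. Then there exist $\nu>0$ and $\psi:[1,\infty)\to\mathbb R_{>0}$ with $\lim_{t\to+\infty}\psi(t)=+\infty$ such that $$\sup_{(Cj^{1+\delta}\psi(1/z))^{-1}<|x|<1}\frac{|h(x)|}{R^j}<\inf_{0<\pm y\leq\xi(z)}\frac{|h(y)|}{\psi(1/z)}$$ for all integers $j\geq1$ and all $z\in(0,\nu]$.
   Context: In the infimum, $y$ ranges over reals with $0<y\le\xi(z)$ if the sign is $+$, and $0<-y\le\xi(z)$ if the sign is $-$, matching the side on which $|h|\to\infty$. *)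

theory Defs
  imports "HOL-Analysis.Analysis"
begin

end

theory Submission
  imports Defs
begin

(* For a fixed scale P the quotient |h x| / R^j is bounded on the annuli
   1/(C j^(1+delta) P) < |x| < 1 uniformly in j: there the growth bound gives
   |h x| <= K exp ((C P)^(1-delta) j^(1-delta^2)), and j^(1-delta^2) loses against j ln R.
   Since |h| blows up on the chosen side of 0 and xi z -> 0, for every n the infimum of
   |h y| / n over 0 < +-y <= xi z exceeds that bound for P = n plus one once z is small
   enough (only xi z -> 0 is used, not the range condition on xi).
   Taking psi (1/z) to be the largest n for which this has already happened is a
   diagonal choice that still tends to infinity. *)

lemma powr_minus_linear_bounded_above:
  fixes a L e :: real
  assumes "a \<ge> 0" "L > 0" "e < 1"
  shows "\<exists>A. \<forall>x\<ge>1. a * x powr e - L * x \<le> A"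
proof (intro exI allI impI)
  define J where "J = (a / L) powr (1 / (1 - e))"
  fix x :: real
  assume x: "x \<ge> 1"
  show "a * x powr e - L * x \<le> max 0 (a * J)"
  proof (cases "a * x powr e \<le> L * x")
    case False
    have "x powr e * x powr (1 - e) = x"
      using x by (simp add: powr_add[symmetric])
    with False have "x powr e * (L * x powr (1 - e)) < x powr e * a"
      by (simp add: algebra_simps)
    then have "L * x powr (1 - e) < a"
      using x by (simp add: mult_less_cancel_left_pos)
    then have "x powr (1 - e) < a / L"
      using \<open>L > 0\<close> by (simp add: field_simps)
    then have "(x powr (1 - e)) powr (1 / (1 - e)) < J"
      unfolding J_def using x \<open>e < 1\<close> by (intro powr_less_mono2) auto
    then have "x < J"
      using x \<open>e < 1\<close> by (simp add: powr_powr)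
    moreover have "x powr e \<le> x"
      using x \<open>e < 1\<close> powr_mono[of e 1 x] by simp
    ultimately have "a * x powr e \<le> a * J"
      using \<open>a \<ge> 0\<close> by (meson less_imp_le mult_left_mono order_trans)
    then show ?thesis
      using mult_pos_pos[of L x] \<open>L > 0\<close> x by linarith
  qed simp
qed

lemma subexponential_growth_bounded_on_annuli:
  fixes R c \<delta> K :: real and h :: "real \<Rightarrow> real"
  assumes R: "R > 1" and c: "c > 0" and \<delta>: "0 < \<delta>" "\<delta> < 1"
    and growth: "\<forall>x. x \<in> {-1..1} - {0} \<longrightarrow> \<bar>h x\<bar> \<le> K * exp (\<bar>x\<bar> powr (-1 + \<delta>))"
  shows "\<exists>B. \<forall>j::nat. \<forall>x. j \<ge> 1 \<longrightarrow> inverse (c * real j powr (1 + \<delta>)) < \<bar>x\<bar> \<longrightarrow> \<bar>x\<bar> < 1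
           \<longrightarrow> \<bar>h x\<bar> / R ^ j \<le> B"
proof -
  have "\<bar>h 1\<bar> \<le> K * exp 1"
    using growth[rule_format, of 1] by simp
  then have K: "K \<ge> 0"
    using exp_gt_zero[of 1] by (metis abs_ge_zero order_trans zero_le_mult_iff not_le)
  define a where "a = c powr (1 - \<delta>)"
  obtain A where A: "\<And>x. x \<ge> 1 \<Longrightarrow> a * x powr (1 - \<delta>\<^sup>2) - ln R * x \<le> A"
    using powr_minus_linear_bounded_above[of a "ln R" "1 - \<delta>\<^sup>2"] R \<delta>
    by (auto simp: a_def)
  show ?thesis
  proof (intro exI allI impI)
    fix j :: nat and x :: real
    assume j: "j \<ge> 1" and x: "inverse (c * real j powr (1 + \<delta>)) < \<bar>x\<bar>" "\<bar>x\<bar> < 1"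
    define q where "q = c * real j powr (1 + \<delta>)"
    have q: "q > 0" "inverse q < \<bar>x\<bar>"
      using c j x by (auto simp: q_def)
    have "\<bar>x\<bar> powr (-1 + \<delta>) < inverse q powr (-1 + \<delta>)"
      using \<delta> q by (intro powr_less_mono2_neg) auto
    also have "\<dots> = a * real j powr (1 - \<delta>\<^sup>2)"
      using c j \<delta> unfolding q_def a_def
      by (simp add: inverse_powr powr_minus[symmetric] powr_mult powr_powr
          power2_eq_square algebra_simps)
    finally have exponent: "\<bar>x\<bar> powr (-1 + \<delta>) < a * real j powr (1 - \<delta>\<^sup>2)" .
    have "x \<in> {-1..1} - {0}"
      using q x(2) by auto
    then have "\<bar>h x\<bar> \<le> K * exp (\<bar>x\<bar> powr (-1 + \<delta>))"
      using growth by blast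
    also have "\<dots> \<le> K * exp (a * real j powr (1 - \<delta>\<^sup>2))"
      using exponent K by (intro mult_left_mono) auto
    finally have "\<bar>h x\<bar> \<le> K * exp (a * real j powr (1 - \<delta>\<^sup>2))" .
    moreover have "R ^ j = exp (ln R * real j)"
      using R by (simp add: exp_of_nat_mult mult.commute)
    ultimately have "\<bar>h x\<bar> / R ^ j \<le> K * exp (a * real j powr (1 - \<delta>\<^sup>2) - ln R * real j)"
      by (simp add: exp_diff divide_right_mono)
    also have "\<dots> \<le> K * exp A"
      using A[of "real j"] j K by (intro mult_left_mono) auto
    finally show "\<bar>h x\<bar> / R ^ j \<le> K * exp A" .
  qed
qed

lemma eventually_diagonal_at_top:
  fixes P :: "nat \<Rightarrow> real \<Rightarrow> bool"
  assumes "\<And>n. eventually (P n) at_top"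
  shows "\<exists>\<psi> :: real \<Rightarrow> nat. filterlim \<psi> at_top at_top \<and> (\<forall>t. 1 \<le> \<psi> t)
           \<and> eventually (\<lambda>t. P (\<psi> t) t) at_top"
proof -
  define S where "S t = insert 1 {n. real n \<le> t \<and> (\<forall>s\<ge>t. P n s)}" for t
  have "{n. real n \<le> t} \<subseteq> {..nat \<lceil>t\<rceil>}" for t
    by (auto simp: le_nat_iff) (metis ceiling_mono ceiling_of_nat)
  then have S: "finite (S t)" "S t \<noteq> {}" for t
    unfolding S_def by (auto intro: finite_subset)
  define \<psi> where "\<psi> t = Max (S t)" for t
  have ge_\<psi>: "n \<le> \<psi> t" if "n \<in> S t" for n t
    using S that by (simp add: \<psi>_def)
  have "filterlim \<psi> at_top at_top"
    unfolding filterlim_at_top eventually_at_top_linorder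
  proof
    fix n :: nat
    obtain T where "\<forall>s\<ge>T. P n s"
      using assms[of n] by (auto simp: eventually_at_top_linorder)
    then have "n \<in> S t" if "t \<ge> max T (real n)" for t
      using that by (auto simp: S_def)
    then show "\<exists>T. \<forall>t\<ge>T. n \<le> \<psi> t"
      using ge_\<psi> by blast
  qed
  moreover have "1 \<le> \<psi> t" for t
    by (rule ge_\<psi>) (simp add: S_def)
  moreover have "eventually (\<lambda>t. P (\<psi> t) t) at_top"
    using assms[of 1]
  proof eventually_elim
    case (elim t)
    have "\<psi> t \<in> S t"
      using S by (simp add: \<psi>_def)
    with elim show ?case
      by (auto simp: S_def)
  qed
  ultimately show ?thesis
    by blast
qed

lemma eventually_ge_on_vanishing_intervals:
  fixes g :: "real \<Rightarrow> real" and \<epsilon> :: "'a \<Rightarrow> real"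
  assumes "filterlim g at_top (at_right 0)" "(\<epsilon> \<longlongrightarrow> 0) F"
  shows "\<forall>\<^sub>F t in F. \<forall>y. 0 < y \<and> y \<le> \<epsilon> t \<longrightarrow> M \<le> g y"
proof -
  have "eventually (\<lambda>y. M \<le> g y) (at_right 0)"
    using assms(1) by (simp add: filterlim_at_top)
  then obtain d where "d > 0" and d: "\<And>y. 0 < y \<Longrightarrow> y < d \<Longrightarrow> M \<le> g y"
    by (auto simp: eventually_at_right_field)
  from order_tendstoD(2)[OF assms(2) \<open>d > 0\<close>] show ?thesis
    by eventually_elim (auto intro: d)
qed

lemma eventually_one_sided_blowup:
  fixes h \<xi> :: "real \<Rightarrow> real" and \<sigma> :: real
  assumes \<sigma>: "\<sigma> = 1 \<or> \<sigma> = -1"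
    and "filterlim (\<lambda>x. \<bar>h x\<bar>) at_top (if \<sigma> = 1 then at_right 0 else at_left 0)"
    and "(\<xi> \<longlongrightarrow> 0) (at_right 0)"
  shows "\<forall>\<^sub>F t in at_top. \<forall>y. 0 < \<sigma> * y \<and> \<sigma> * y \<le> \<xi> (1 / t) \<longrightarrow> M \<le> \<bar>h y\<bar>"
proof -
  have "filterlim (\<lambda>y. \<bar>h (\<sigma> * y)\<bar>) at_top (at_right 0)"
    using assms(1,2) by (auto simp: filterlim_at_left_to_right)
  moreover have "((\<lambda>t. \<xi> (1 / t)) \<longlongrightarrow> 0) at_top"
    using assms(3) by (simp add: filterlim_at_right_to_top inverse_eq_divide)
  ultimately have "\<forall>\<^sub>F t in at_top. \<forall>y. 0 < y \<and> y \<le> \<xi> (1 / t) \<longrightarrow> M \<le> \<bar>h (\<sigma> * y)\<bar>"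
    by (rule eventually_ge_on_vanishing_intervals)
  moreover have "\<sigma> * (\<sigma> * y) = y" for y
    using \<sigma> by auto
  ultimately show ?thesis
    by (elim eventually_mono) metis
qed

lemma SUP_less_INF_ereal:
  fixes f g :: "'a \<Rightarrow> real"
  assumes "\<And>x. x \<in> A \<Longrightarrow> f x \<le> b" "\<And>y. y \<in> B \<Longrightarrow> c \<le> g y" "b < c"
  shows "(SUP x\<in>A. ereal (f x)) < (INF y\<in>B. ereal (g y))"
proof -
  have "(SUP x\<in>A. ereal (f x)) \<le> ereal b"
    using assms(1) by (intro SUP_least) simp
  also have "\<dots> < ereal c"
    using assms(3) by simp
  also have "\<dots> \<le> (INF y\<in>B. ereal (g y))"
    using assms(2) by (intro INF_greatest) simp
  finally show ?thesis .
qed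

theorem lemma3p11:
  fixes R C \<delta> \<sigma> :: real
    and h :: "real \<Rightarrow> real"
    and \<xi> :: "real \<Rightarrow> real"
  assumes R: "R > 1"
    and C: "C \<ge> 1"
    and \<delta>: "0 < \<delta>" "\<delta> < 1"
    and growth: "\<exists>K. \<forall>x. x \<in> {-1..1} - {0} \<longrightarrow> \<bar>h x\<bar> \<le> K * exp (\<bar>x\<bar> powr (-1 + \<delta>))"
    and sign: "\<sigma> = 1 \<or> \<sigma> = -1"
    and blowup: "filterlim (\<lambda>x. \<bar>h x\<bar>) at_top (if \<sigma> = 1 then at_right 0 else at_left 0)"
    and \<xi>_range: "\<forall>x \<in> {0<..1}. \<xi> x \<in> {0<..1}"
    and \<xi>_lim: "(\<xi> \<longlongrightarrow> 0) (at_right 0)"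
  shows "\<exists>\<nu> > 0. \<nu> \<le> 1 \<and> (\<exists>\<psi> :: real \<Rightarrow> real.
           (\<forall>t \<ge> 1. \<psi> t > 0) \<and> filterlim \<psi> at_top at_top \<and>
           (\<forall>j :: nat. \<forall>z. j \<ge> 1 \<longrightarrow> z \<in> {0<..\<nu>} \<longrightarrow>
              (SUP x \<in> {x. inverse (C * real j powr (1 + \<delta>) * \<psi> (1 / z)) < \<bar>x\<bar> \<and> \<bar>x\<bar> < 1}.
                  ereal (\<bar>h x\<bar> / R ^ j))
              < (INF y \<in> {y. 0 < \<sigma> * y \<and> \<sigma> * y \<le> \<xi> z}. ereal (\<bar>h y\<bar> / \<psi> (1 / z)))))"
proof -
  obtain K where K: "\<forall>x. x \<in> {-1..1} - {0} \<longrightarrow> \<bar>h x\<bar> \<le> K * exp (\<bar>x\<bar> powr (-1 + \<delta>))"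
    using growth by blast
  have "\<exists>B. \<forall>j::nat. \<forall>x. j \<ge> 1 \<longrightarrow> inverse (C * real j powr (1 + \<delta>) * real n) < \<bar>x\<bar>
          \<longrightarrow> \<bar>x\<bar> < 1 \<longrightarrow> \<bar>h x\<bar> / R ^ j \<le> B" if "n \<ge> 1" for n :: nat
    using subexponential_growth_bounded_on_annuli[OF R _ \<delta> K, of "C * real n"] C that
    by (simp add: mult_ac)
  then obtain B where B: "\<And>n j x. n \<ge> 1 \<Longrightarrow> j \<ge> 1 \<Longrightarrow> inverse (C * real j powr (1 + \<delta>) * real n) < \<bar>x\<bar>
                            \<Longrightarrow> \<bar>x\<bar> < 1 \<Longrightarrow> \<bar>h x\<bar> / R ^ j \<le> B n"
    by metis
  have "\<forall>\<^sub>F t in at_top. \<forall>y. 0 < \<sigma> * y \<and> \<sigma> * y \<le> \<xi> (1 / t) \<longrightarrow> (B n + 1) * n \<le> \<bar>h y\<bar>" for n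
    by (rule eventually_one_sided_blowup[OF sign blowup \<xi>_lim])
  from eventually_diagonal_at_top[where
      P = "\<lambda>n t. \<forall>y. 0 < \<sigma> * y \<and> \<sigma> * y \<le> \<xi> (1 / t) \<longrightarrow> (B n + 1) * n \<le> \<bar>h y\<bar>", OF this]
  obtain \<psi> :: "real \<Rightarrow> nat" where \<psi>: "filterlim \<psi> at_top at_top" "\<And>t. 1 \<le> \<psi> t"
    and "\<forall>\<^sub>F t in at_top. \<forall>y. 0 < \<sigma> * y \<and> \<sigma> * y \<le> \<xi> (1 / t) \<longrightarrow> (B (\<psi> t) + 1) * \<psi> t \<le> \<bar>h y\<bar>"
    by blast
  then obtain T where T: "\<And>t y. t \<ge> T \<Longrightarrow> 0 < \<sigma> * y \<Longrightarrow> \<sigma> * y \<le> \<xi> (1 / t)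
                            \<Longrightarrow> (B (\<psi> t) + 1) * \<psi> t \<le> \<bar>h y\<bar>"
    by (auto simp: eventually_at_top_linorder)
  show ?thesis
  proof (intro exI[of _ "1 / max T 1"] exI[of _ "\<lambda>t. real (\<psi> t)"] conjI allI impI)
    show "filterlim (\<lambda>t. real (\<psi> t)) at_top at_top"
      using filterlim_compose[OF filterlim_real_sequentially \<psi>(1)] .
    fix j :: nat and z :: real
    assume j: "j \<ge> 1" and z: "z \<in> {0<..1 / max T 1}"
    then have "1 / z \<ge> T"
      using le_imp_inverse_le[of z "1 / max T 1"] by (simp add: inverse_eq_divide)
    show "(SUP x \<in> {x. inverse (C * real j powr (1 + \<delta>) * real (\<psi> (1 / z))) < \<bar>x\<bar> \<and> \<bar>x\<bar> < 1}.
                  ereal (\<bar>h x\<bar> / R ^ j))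
          < (INF y \<in> {y. 0 < \<sigma> * y \<and> \<sigma> * y \<le> \<xi> z}. ereal (\<bar>h y\<bar> / real (\<psi> (1 / z))))"
    proof (rule SUP_less_INF_ereal)
      show "\<bar>h x\<bar> / R ^ j \<le> B (\<psi> (1 / z))"
        if "x \<in> {x. inverse (C * real j powr (1 + \<delta>) * real (\<psi> (1 / z))) < \<bar>x\<bar> \<and> \<bar>x\<bar> < 1}" for x
        using B \<psi>(2) j that by blast
      show "B (\<psi> (1 / z)) + 1 \<le> \<bar>h y\<bar> / real (\<psi> (1 / z))"
        if "y \<in> {y. 0 < \<sigma> * y \<and> \<sigma> * y \<le> \<xi> z}" for y
        using T[OF \<open>1 / z \<ge> T\<close>, of y] that \<psi>(2)[of "1 / z"] by (simp add: pos_le_divide_eq)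
    qed simp
  qed (use \<psi>(2) in \<open>auto simp: Suc_le_eq\<close>)
qed

end
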